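(* Let Assumption 1 hold and suppose $n_k\ge N-1$ for some $k\in[L-1]$. Then for any $(W^0_l,b^0_l)_{l=1}^k$ and every $\epsilon>0$ there exists $(W_l,b_l)_{l=1}^k$ in the open Euclidean ball of radius $\epsilon$ around $(W^0_l,b^0_l)_{l=1}^k$ such that $\operatorname{rank}([F_k,\mathbf{1}_N])=N$, where $F_k$ is computed with the parameters $(W_l,b_l)_{l=1}^k$.
   Context: Training inputs $x_1,\dots,x_N\in\mathbb{R}^d$. A fully connected network with widths $n_0=d,n_1,\dots$, weights $W_l\in\mathbb{R}^{n_{l-1}\times n_l}$, biases $b_l\in\mathbb{R}^{n_l}$; with $\sigma$ applied componentwise, $f_0(x)=x$, $f_l(x)=\sigma(W_l^Tf_{l-1}(x)+b_l)$. $F_k\in\mathbb{R}^{N\times n_k}$ has $i$-th row $f_k(x_i)^T$; $\mathbf{1}_N$ is the all-ones vector. Parameters of the first $k$ layers are identified with a vector in Euclidean space. Assumption 1 (relevant parts): (1) $x_i\neq x_j$ for all $i\neq j$; (2) $\sigma$ is real analytic on $\mathbb{R}$ with $\sigma'(t)>0$ for all $t$, and either (a) $\sigma$ is bounded or (b) there are positive $\rho_1,\rho_2,\rho_3,\rho_4$ with $|\sigma(t)|\le\rho_1e^{\rho_2t}$ for $t<0$ and $|\sigma(t)|\le\rho_3t+\rho_4$ for $t\ge0$. *)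

theory Defs
  imports Complex_Main "Jordan_Normal_Form.DL_Rank"
begin

definition real_analytic_on_R :: "(real \<Rightarrow> real) \<Rightarrow> bool" where
  "real_analytic_on_R \<sigma> \<longleftrightarrow>
     (\<forall>x. \<exists>r>0. \<exists>a :: nat \<Rightarrow> real. \<forall>y. \<bar>y - x\<bar> < r \<longrightarrow> (\<lambda>m. a m * (y - x) ^ m) sums \<sigma> y)"

text \<open>Vectors are functions nat => real, meaningful on indices below the width.
  W l i j is the (i,j) entry of W_l (an n_(l-1) x n_l matrix), b l j the j-th entry of b_l.
  f_0(x) = x, f_l(x) = sigma(W_l^T f_(l-1)(x) + b_l).\<close>
fun layer :: "(real \<Rightarrow> real) \<Rightarrow> (nat \<Rightarrow> nat) \<Rightarrow> (nat \<Rightarrow> nat \<Rightarrow> nat \<Rightarrow> real)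
              \<Rightarrow> (nat \<Rightarrow> nat \<Rightarrow> real) \<Rightarrow> nat \<Rightarrow> (nat \<Rightarrow> real) \<Rightarrow> (nat \<Rightarrow> real)" where
  "layer \<sigma> n W b 0 x = x"
| "layer \<sigma> n W b (Suc l) x =
     (\<lambda>j. \<sigma> ((\<Sum>i<n l. W (Suc l) i j * layer \<sigma> n W b l x i) + b (Suc l) j))"

definition feat_ones :: "(real \<Rightarrow> real) \<Rightarrow> (nat \<Rightarrow> nat) \<Rightarrow> (nat \<Rightarrow> nat \<Rightarrow> nat \<Rightarrow> real)
              \<Rightarrow> (nat \<Rightarrow> nat \<Rightarrow> real) \<Rightarrow> nat \<Rightarrow> nat \<Rightarrow> (nat \<Rightarrow> nat \<Rightarrow> real) \<Rightarrow> real mat" where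
  "feat_ones \<sigma> n W b k N x =
     mat N (n k + 1) (\<lambda>(i, j). if j < n k then layer \<sigma> n W b k (x i) j else 1)"

definition param_dist :: "(nat \<Rightarrow> nat) \<Rightarrow> nat \<Rightarrow> (nat \<Rightarrow> nat \<Rightarrow> nat \<Rightarrow> real) \<Rightarrow> (nat \<Rightarrow> nat \<Rightarrow> real)
              \<Rightarrow> (nat \<Rightarrow> nat \<Rightarrow> nat \<Rightarrow> real) \<Rightarrow> (nat \<Rightarrow> nat \<Rightarrow> real) \<Rightarrow> real" where
  "param_dist n k W b W' b' =
     sqrt (\<Sum>l\<in>{1..k}. (\<Sum>i<n (l - 1). \<Sum>j<n l. (W l i j - W' l i j)\<^sup>2)
                        + (\<Sum>j<n l. (b l j - b' l j)\<^sup>2))"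

end

theory Submission
  imports Defs "HOL-Computational_Algebra.Fundamental_Theorem_Algebra"
begin

text \<open>
  The first k - 1 layers are perturbed one at a time so that the features of distinct inputs stay
  distinct: the first neuron of the next layer receives a generic projection of the features with a
  generic weight, and a strictly increasing \<sigma> keeps the resulting values apart. At layer k a generic
  projection turns the features into distinct reals s_i, and a rank-one perturbation of W_k and b_k
  makes entry (i, j) of F_k equal to \<sigma>(z_ji + \<alpha>_j s_i + \<beta>_j) with small free parameters \<alpha>_j, \<beta>_j.
  The first N - 1 columns are then chosen greedily, independent of each other and of the column of
  ones. Greedy choice works because no nonzero \<lambda> is orthogonal to such a column for all small \<alpha>, \<beta>:
  expanding \<sigma> in power series at the z_ji along the lines (\<alpha>, \<beta>) = \<tau> (p, 1) and comparing
  coefficients gives \<Sum>_i \<lambda>_i a_im (p s_i + 1)^m = 0 for all p, so by a Vandermonde argument \<sigma> is a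
  polynomial near some z_ji. Analytic continuation makes \<sigma> that polynomial on a half-line to the
  left, where \<sigma> is bounded; hence the polynomial is constant, contradicting \<sigma>' > 0.
\<close>

section \<open>Activations that agree with a polynomial near a point\<close>

lemma powser_coeff0_eq_0_at_right:
  fixes c :: "nat \<Rightarrow> real"
  assumes "0 < \<eta>" and vanish: "\<And>h. 0 < h \<Longrightarrow> h < \<eta> \<Longrightarrow> (\<lambda>m. c m * h ^ m) sums 0"
  shows "c 0 = 0"
proof -
  define s where "s = \<eta> / 2"
  have s: "0 < s" "s < \<eta>" using assms(1) by (auto simp: s_def)
  have "summable (\<lambda>m. c m * s ^ m)" using vanish[OF s] sums_summable by blast
  then have "(\<lambda>m. c m * h ^ m) sums (\<Sum>m. c m * h ^ m)" if "norm h < s" for h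
    using powser_insidea[of c s h] that s by (simp add: summable_norm_cancel summable_sums)
  then have "((\<lambda>h. \<Sum>m. c m * h ^ m) \<longlongrightarrow> c 0) (at 0)"
    by (rule powser_limit_0[OF s(1)])
  then have lim: "((\<lambda>h. \<Sum>m. c m * h ^ m) \<longlongrightarrow> c 0) (at_right 0)"
    by (rule tendsto_within_subset) simp
  have "eventually (\<lambda>h. (\<Sum>m. c m * h ^ m) = 0) (at_right (0::real))"
    unfolding eventually_at_right_field
  proof (intro exI[of _ s] conjI allI impI)
    fix h :: real assume "0 < h" "h < s"
    then show "(\<Sum>m. c m * h ^ m) = 0" using vanish[of h] s sums_unique by fastforce
  qed (fact s)
  then have "((\<lambda>h. \<Sum>m. c m * h ^ m) \<longlongrightarrow> 0) (at_right 0)"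
    by (rule tendsto_eventually)
  from tendsto_unique[OF _ lim this] show ?thesis by simp
qed

lemma powser_coeffs_eq_0_at_right:
  fixes c :: "nat \<Rightarrow> real"
  assumes "0 < \<eta>" and vanish: "\<And>h. 0 < h \<Longrightarrow> h < \<eta> \<Longrightarrow> (\<lambda>m. c m * h ^ m) sums 0"
  shows "c m = 0"
proof (induction m rule: less_induct)
  case (less m)
  have "(\<lambda>j. c (j + m) * h ^ j) sums 0" if h: "0 < h" "h < \<eta>" for h
  proof -
    have "(\<lambda>j. c (j + m) * h ^ (j + m)) sums (0 - (\<Sum>i<m. c i * h ^ i))"
      using sums_split_initial_segment[OF vanish[OF h], of m] by simp
    also have "(\<Sum>i<m. c i * h ^ i) = 0" using less by simp
    finally have "(\<lambda>j. c (j + m) * h ^ (j + m) / h ^ m) sums (0 / h ^ m)"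
      by (intro sums_divide) simp
    then show ?thesis using h by (simp add: power_add)
  qed
  from powser_coeff0_eq_0_at_right[OF assms(1) this] show ?case by simp
qed

lemma poly_powser_sums:
  fixes q :: "real poly"
  shows "(\<lambda>m. coeff q m * h ^ m) sums poly q h"
proof -
  have "(\<lambda>m. coeff q m * h ^ m) sums (\<Sum>m\<le>degree q. coeff q m * h ^ m)"
    by (rule sums_finite) (auto simp: coeff_eq_0)
  then show ?thesis by (simp add: poly_altdef)
qed

lemma analytic_eq_poly_near_if_eq_right:
  fixes \<sigma> :: "real \<Rightarrow> real" and P :: "real poly"
  assumes "real_analytic_on_R \<sigma>" and "0 < \<eta>"
    and eq: "\<And>y. T < y \<Longrightarrow> y < T + \<eta> \<Longrightarrow> \<sigma> y = poly P y"
  obtains \<rho> where "0 < \<rho>" "\<And>y. \<bar>y - T\<bar> < \<rho> \<Longrightarrow> \<sigma> y = poly P y"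
proof -
  obtain \<rho> a where \<rho>: "0 < \<rho>"
    and ser: "\<And>y. \<bar>y - T\<bar> < \<rho> \<Longrightarrow> (\<lambda>m. a m * (y - T) ^ m) sums \<sigma> y"
    using assms(1) unfolding real_analytic_on_R_def by blast
  define q where "q = pcompose P [:T, 1:]"
  define d where "d m = a m - coeff q m" for m
  have d_sums: "(\<lambda>m. d m * h ^ m) sums (\<sigma> (T + h) - poly P (T + h))" if "\<bar>h\<bar> < \<rho>" for h
    using sums_diff[OF ser[of "T + h"] poly_powser_sums[of q h]] that
    by (simp add: d_def q_def poly_pcompose algebra_simps)
  have "d m = 0" for m
  proof (rule powser_coeffs_eq_0_at_right)
    show "0 < min \<rho> \<eta>" using \<rho> assms(2) by simp
    fix h :: real assume "0 < h" "h < min \<rho> \<eta>"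
    then show "(\<lambda>m. d m * h ^ m) sums 0" using d_sums[of h] eq[of "T + h"] by simp
  qed
  then have "(\<lambda>m. 0) sums (\<sigma> y - poly P y)" if "\<bar>y - T\<bar> < \<rho>" for y
    using d_sums[of "y - T"] that by simp
  then have "\<sigma> y = poly P y" if "\<bar>y - T\<bar> < \<rho>" for y
    using sums_unique2[OF _ sums_zero, of "\<sigma> y - poly P y"] that by simp
  with \<rho> show thesis by (rule that)
qed

lemma analytic_eq_poly_leftwards:
  fixes \<sigma> :: "real \<Rightarrow> real" and P :: "real poly"
  assumes an: "real_analytic_on_R \<sigma>"
    and "0 < r" and eq: "\<And>y. \<bar>y - z\<bar> < r \<Longrightarrow> \<sigma> y = poly P y" and "y \<le> z"
  shows "\<sigma> y = poly P y"
proof (rule ccontr)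
  assume "\<sigma> y \<noteq> poly P y"
  \<comment> \<open>[T, z] is the largest interval on which \<sigma> = P; analyticity at T extends it past T\<close>
  define A where "A = {u. u \<le> z \<and> (\<forall>v. u \<le> v \<and> v \<le> z \<longrightarrow> \<sigma> v = poly P v)}"
  have zA: "z - r/2 \<in> A" unfolding A_def using \<open>0 < r\<close> eq by auto
  have "y \<le> u" if "u \<in> A" for u
  proof (rule ccontr)
    assume "\<not> y \<le> u"
    with that \<open>y \<le> z\<close> have "\<sigma> y = poly P y" unfolding A_def by auto
    with \<open>\<sigma> y \<noteq> poly P y\<close> show False ..
  qed
  then have bdd: "bdd_below A" by (rule bdd_belowI)
  define T where "T = Inf A"
  have Tz: "T \<le> z - r/2" unfolding T_def by (rule cInf_lower[OF zA bdd])
  have right: "\<sigma> v = poly P v" if "T < v" "v \<le> z" for v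
  proof -
    obtain u where "u \<in> A" "u < v"
      using \<open>T < v\<close> cInf_less_iff[of A v] zA bdd unfolding T_def by blast
    then show ?thesis using that unfolding A_def by auto
  qed
  obtain \<rho> where \<rho>: "0 < \<rho>" "\<And>v. \<bar>v - T\<bar> < \<rho> \<Longrightarrow> \<sigma> v = poly P v"
    using analytic_eq_poly_near_if_eq_right[OF an, of "z - T" T P] Tz \<open>0 < r\<close> right by auto
  have "T - \<rho>/2 \<in> A" unfolding A_def
  proof safe
    show "T - \<rho>/2 \<le> z" using Tz \<open>0 < r\<close> \<rho>(1) by simp
    fix v assume v: "T - \<rho>/2 \<le> v" "v \<le> z"
    show "\<sigma> v = poly P v"
    proof (cases "T < v")
      case False
      with v \<rho>(1) show ?thesis by (intro \<rho>(2)) simp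
    qed (use right v in blast)
  qed
  then have "T \<le> T - \<rho>/2" unfolding T_def by (rule cInf_lower[OF _ bdd])
  then show False using \<rho> by simp
qed

lemma poly_bounded_at_bot_const:
  fixes P :: "real poly"
  assumes "\<And>y. y \<le> c \<Longrightarrow> \<bar>poly P y\<bar> \<le> M"
  shows "poly P y = coeff P 0"
proof (cases P)
  case (pCons a p)
  show ?thesis
  proof (cases "p = 0")
    case False
    obtain R where R: "\<And>w. R \<le> norm w \<Longrightarrow> M + 1 \<le> norm (poly (pCons a p) w)"
      using poly_infinity[OF False] by blast
    have "M + 1 \<le> \<bar>poly P (- \<bar>R\<bar> - \<bar>c\<bar>)\<bar>" using R[of "- \<bar>R\<bar> - \<bar>c\<bar>"] pCons by simp
    moreover have "\<bar>poly P (- \<bar>R\<bar> - \<bar>c\<bar>)\<bar> \<le> M" by (rule assms) simp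
    ultimately show ?thesis by simp
  qed (simp add: pCons)
qed

lemma increasing_analytic_not_locally_poly:
  fixes \<sigma> :: "real \<Rightarrow> real" and P :: "real poly"
  assumes an: "real_analytic_on_R \<sigma>"
    and deriv_pos: "\<forall>t. \<exists>D. (\<sigma> has_real_derivative D) (at t) \<and> D > 0"
    and bdd: "\<And>t. t < 0 \<Longrightarrow> \<bar>\<sigma> t\<bar> \<le> M"
    and "0 < r" and eq: "\<And>y. \<bar>y - z\<bar> < r \<Longrightarrow> \<sigma> y = poly P y"
  shows False
proof -
  have "\<sigma> y = poly P y" if "y \<le> z" for y
    using analytic_eq_poly_leftwards[OF an \<open>0 < r\<close> eq that] .
  then have "\<bar>poly P y\<bar> \<le> M" if "y \<le> min z (-1)" for y
    using bdd[of y] that by auto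
  then have const: "poly P y = coeff P 0" for y by (rule poly_bounded_at_bot_const)
  obtain D where D: "(\<sigma> has_real_derivative D) (at z)" "D > 0" using deriv_pos by blast
  have "((\<lambda>_. coeff P 0) has_real_derivative D) (at z)"
    by (rule has_field_derivative_transform_within_open[OF D(1), of "{z - r <..< z + r}"])
       (use \<open>0 < r\<close> eq const in \<open>auto simp: abs_less_iff\<close>)
  then have "D = 0" using DERIV_const DERIV_unique by blast
  with D show False by simp
qed

section \<open>Shifted activations are not orthogonal to a nonzero vector\<close>

lemma sum_affine_powers_eq_0_imp_zero:
  fixes s c :: "nat \<Rightarrow> real"
  assumes dist: "\<forall>i<N. \<forall>j<N. i \<noteq> j \<longrightarrow> s i \<noteq> s j"
    and "N - 1 \<le> m"
    and vanish: "\<And>p. (\<Sum>i<N. c i * (p * s i + 1) ^ m) = 0"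
    and "i0 < N"
  shows "c i0 = 0"
proof -
  define Q where "Q = (\<Sum>i<N. smult (c i) ([:1, s i:] ^ m))"
  have "poly Q p = 0" for p
    using vanish[of p] by (simp add: Q_def poly_sum algebra_simps)
  then have "Q = 0" using poly_all_0_iff_0 by blast
  have moments: "(\<Sum>i<N. c i * s i ^ j) = 0" if "j \<le> m" for j
  proof -
    have "0 = coeff Q j" using \<open>Q = 0\<close> by simp
    also have "\<dots> = of_nat (m choose j) * (\<Sum>i<N. c i * s i ^ j)"
      by (simp add: Q_def coeff_sum coeff_linear_poly_power[OF that] sum_distrib_left mult_ac)
    finally show ?thesis using that by simp
  qed
  \<comment> \<open>test the moments against the Lagrange-type polynomial vanishing at all s i except s i0\<close>
  define g where "g = (\<Prod>i\<in>{..<N} - {i0}. [:- s i, 1:])"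
  have "degree g \<le> card ({..<N} - {i0})"
    unfolding g_def by (rule order.trans[OF degree_prod_sum_le]) simp_all
  then have deg: "degree g \<le> m" using \<open>N - 1 \<le> m\<close> \<open>i0 < N\<close> by simp
  have "poly g (s i) = 0" if "i \<in> {..<N} - {i0}" for i
    using that unfolding g_def poly_prod by (intro prod_zero) auto
  then have "c i0 * poly g (s i0) = (\<Sum>i<N. c i * poly g (s i))"
    using \<open>i0 < N\<close> by (subst sum.remove[of _ i0]) (auto intro!: sum.neutral)
  also have "\<dots> = (\<Sum>a\<le>degree g. coeff g a * (\<Sum>i<N. c i * s i ^ a))"
    by (simp add: poly_altdef sum_distrib_left sum_distrib_right mult_ac sum.swap[of _ "{..<N}"])
  also have "\<dots> = 0" using moments deg by simp
  finally show ?thesis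
    using dist \<open>i0 < N\<close> by (auto simp: g_def poly_prod)
qed

lemma real_analytic_on_R_common_radius:
  fixes f :: "real \<Rightarrow> real" and z :: "nat \<Rightarrow> real"
  assumes "real_analytic_on_R f"
  obtains R a where "0 < R"
    "\<And>i y. i < N \<Longrightarrow> \<bar>y - z i\<bar> < R \<Longrightarrow> (\<lambda>m. a i m * (y - z i) ^ m) sums f y"
proof -
  have "\<forall>i. \<exists>r a. 0 < r \<and> (\<forall>y. \<bar>y - z i\<bar> < r \<longrightarrow> (\<lambda>m. a m * (y - z i) ^ m) sums f y)"
    using assms unfolding real_analytic_on_R_def by blast
  then obtain r a where ra: "\<And>i. 0 < r i"
    "\<And>i y. \<bar>y - z i\<bar> < r i \<Longrightarrow> (\<lambda>m. a i m * (y - z i) ^ m) sums f y"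
    by metis
  define R where "R = Min (insert 1 (r ` {..<N}))"
  have "0 < R" unfolding R_def using ra(1) by (subst Min_gr_iff) simp_all
  moreover have "R \<le> r i" if "i < N" for i unfolding R_def using that by simp
  ultimately show thesis using ra(2) by (intro that[of R a]) force+
qed

lemma local_powsers_combination_coeffs_eq_0:
  fixes f :: "real \<Rightarrow> real" and z w lam :: "nat \<Rightarrow> real"
  assumes "0 < R" and ser: "\<And>i y. i < N \<Longrightarrow> \<bar>y - z i\<bar> < R \<Longrightarrow> (\<lambda>m. a i m * (y - z i) ^ m) sums f y"
    and "0 < \<eta>" and vanish: "\<And>\<tau>. 0 < \<tau> \<Longrightarrow> \<tau> < \<eta> \<Longrightarrow> (\<Sum>i<N. lam i * f (z i + \<tau> * w i)) = 0"
  shows "(\<Sum>i<N. lam i * a i m * w i ^ m) = 0"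
proof (rule powser_coeffs_eq_0_at_right[where c = "\<lambda>m. \<Sum>i<N. lam i * a i m * w i ^ m"])
  define B where "B = 1 + (\<Sum>i<N. \<bar>w i\<bar>)"
  have "1 \<le> B" unfolding B_def by (simp add: sum_nonneg)
  then show "0 < min \<eta> (R / B)" using \<open>0 < R\<close> \<open>0 < \<eta>\<close> by simp
  fix \<tau> :: real assume \<tau>: "0 < \<tau>" "\<tau> < min \<eta> (R / B)"
  have "\<bar>(z i + \<tau> * w i) - z i\<bar> < R" if "i < N" for i
  proof -
    have "\<bar>w i\<bar> \<le> (\<Sum>i<N. \<bar>w i\<bar>)" by (rule member_le_sum) (use that in auto)
    then have "\<bar>w i\<bar> \<le> B" unfolding B_def by simp
    then have "\<bar>\<tau> * w i\<bar> \<le> \<tau> * B" using \<tau>(1) by (simp add: abs_mult)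
    also have "\<dots> < R" using \<tau> \<open>1 \<le> B\<close> by (simp add: less_divide_eq)
    finally show ?thesis by simp
  qed
  then have "(\<lambda>m. \<Sum>i<N. lam i * (a i m * ((z i + \<tau> * w i) - z i) ^ m))
      sums (\<Sum>i<N. lam i * f (z i + \<tau> * w i))"
    by (intro sums_sum sums_mult ser) simp_all
  then show "(\<lambda>m. (\<Sum>i<N. lam i * a i m * w i ^ m) * \<tau> ^ m) sums 0"
    using vanish \<tau> by (simp add: power_mult_distrib sum_distrib_left sum_distrib_right mult_ac)
qed

lemma exists_shifted_combination_nonzero:
  fixes \<sigma> :: "real \<Rightarrow> real" and z s lam :: "nat \<Rightarrow> real"
  assumes an: "real_analytic_on_R \<sigma>"
    and deriv_pos: "\<forall>t. \<exists>D. (\<sigma> has_real_derivative D) (at t) \<and> D > 0"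
    and bdd: "\<And>t. t < 0 \<Longrightarrow> \<bar>\<sigma> t\<bar> \<le> M"
    and dist: "\<forall>i<N. \<forall>j<N. i \<noteq> j \<longrightarrow> s i \<noteq> s j"
    and "i0 < N" "lam i0 \<noteq> 0" and "0 < \<delta>"
  shows "\<exists>\<alpha> \<beta>. \<bar>\<alpha>\<bar> < \<delta> \<and> \<bar>\<beta>\<bar> < \<delta> \<and> (\<Sum>i<N. lam i * \<sigma> (z i + \<alpha> * s i + \<beta>)) \<noteq> 0"
proof (rule ccontr)
  assume "\<not> ?thesis"
  then have vanish: "\<And>\<alpha> \<beta>. \<bar>\<alpha>\<bar> < \<delta> \<Longrightarrow> \<bar>\<beta>\<bar> < \<delta> \<Longrightarrow> (\<Sum>i<N. lam i * \<sigma> (z i + \<alpha> * s i + \<beta>)) = 0"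
    by blast
  obtain R a where "0 < R"
    and ser: "\<And>i y. i < N \<Longrightarrow> \<bar>y - z i\<bar> < R \<Longrightarrow> (\<lambda>m. a i m * (y - z i) ^ m) sums \<sigma> y"
    using real_analytic_on_R_common_radius[OF an] by blast
  \<comment> \<open>restrict to the lines (\<alpha>, \<beta>) = \<tau> (p, 1)\<close>
  have "(\<Sum>i<N. lam i * a i m * (p * s i + 1) ^ m) = 0" for p m
  proof (rule local_powsers_combination_coeffs_eq_0[OF \<open>0 < R\<close> ser])
    show "0 < \<delta> / (\<bar>p\<bar> + 1)" using \<open>0 < \<delta>\<close> by simp
    fix \<tau> :: real assume \<tau>: "0 < \<tau>" "\<tau> < \<delta> / (\<bar>p\<bar> + 1)"
    then have "\<tau> * (\<bar>p\<bar> + 1) < \<delta>" by (simp add: less_divide_eq)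
    moreover have "\<bar>\<tau> * p\<bar> \<le> \<tau> * (\<bar>p\<bar> + 1)" "\<bar>\<tau>\<bar> \<le> \<tau> * (\<bar>p\<bar> + 1)"
      using \<tau>(1) by (simp_all add: abs_mult algebra_simps)
    ultimately have "(\<Sum>i<N. lam i * \<sigma> (z i + (\<tau> * p) * s i + \<tau>)) = 0"
      by (intro vanish) simp_all
    then show "(\<Sum>i<N. lam i * \<sigma> (z i + \<tau> * (p * s i + 1))) = 0"
      by (simp add: algebra_simps)
  qed
  then have "lam i0 * a i0 m = 0" if "N - 1 \<le> m" for m
    using sum_affine_powers_eq_0_imp_zero[OF dist that _ \<open>i0 < N\<close>, of "\<lambda>i. lam i * a i m"] by blast
  then have high: "a i0 m = 0" if "N - 1 \<le> m" for m
    using that \<open>lam i0 \<noteq> 0\<close> by simp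
  define P where "P = (\<Sum>m<N - 1. smult (a i0 m) ([:- z i0, 1:] ^ m))"
  have "\<sigma> y = poly P y" if "\<bar>y - z i0\<bar> < R" for y
  proof -
    have "(\<lambda>m. a i0 m * (y - z i0) ^ m) sums (\<Sum>m<N - 1. a i0 m * (y - z i0) ^ m)"
      using high by (intro sums_finite) auto
    from sums_unique2[OF ser[OF \<open>i0 < N\<close> that] this] show ?thesis
      by (simp add: P_def poly_sum)
  qed
  with increasing_analytic_not_locally_poly[OF an deriv_pos bdd \<open>0 < R\<close>] show False by blast
qed

lemma exists_shifted_column_not_orthogonal:
  fixes \<sigma> :: "real \<Rightarrow> real" and z s :: "nat \<Rightarrow> real" and v :: "real vec"
  assumes an: "real_analytic_on_R \<sigma>"
    and deriv_pos: "\<forall>t. \<exists>D. (\<sigma> has_real_derivative D) (at t) \<and> D > 0"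
    and bdd: "\<And>t. t < 0 \<Longrightarrow> \<bar>\<sigma> t\<bar> \<le> M"
    and dist: "\<forall>i<N. \<forall>j<N. i \<noteq> j \<longrightarrow> s i \<noteq> s j"
    and v: "v \<in> carrier_vec N" "v \<noteq> 0\<^sub>v N" and "0 < \<delta>"
  shows "\<exists>\<alpha> \<beta>. \<bar>\<alpha>\<bar> < \<delta> \<and> \<bar>\<beta>\<bar> < \<delta> \<and> v \<bullet> vec N (\<lambda>i. \<sigma> (z i + \<alpha> * s i + \<beta>)) \<noteq> 0"
proof -
  have "\<exists>i0<N. v $ i0 \<noteq> 0"
  proof (rule ccontr)
    assume "\<not> ?thesis"
    then have "v = 0\<^sub>v N" using v(1) by (intro eq_vecI) auto
    with v(2) show False ..
  qed
  then obtain i0 where "i0 < N" "v $ i0 \<noteq> 0" by blast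
  from exists_shifted_combination_nonzero[where lam = "\<lambda>i. v $ i" and z = z,
      OF an deriv_pos bdd dist this \<open>0 < \<delta>\<close>]
  show ?thesis using v(1) by (simp add: scalar_prod_def lessThan_atLeast0)
qed

section \<open>Greedy choice of linearly independent columns\<close>

lemma exists_nonzero_orthogonal:
  fixes U :: "'a::field vec set"
  assumes "U \<subseteq> carrier_vec n" "finite U" "card U < n"
  obtains v where "v \<in> carrier_vec n" "v \<noteq> 0\<^sub>v n" "\<And>u. u \<in> U \<Longrightarrow> v \<bullet> u = 0"
proof -
  obtain us where us: "set us = U" "distinct us" using finite_distinct_list[OF assms(2)] by blast
  have len: "length us < n" using distinct_card[OF us(2)] us(1) assms(3) by simp
  define c where "c i = (if i < length us then us ! i else 0\<^sub>v n)" for i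
  define M where "M = mat\<^sub>r n n (\<lambda>i. if i = n - 1 then 0\<^sub>v n else c i)"
  have M: "M \<in> carrier_mat n n" unfolding M_def by simp
  have "c i \<in> carrier_vec n" for i
  proof (cases "i < length us")
    case True
    then have "us ! i \<in> U" using us(1) by auto
    with True assms(1) show ?thesis by (auto simp: c_def)
  qed (simp add: c_def)
  then have "det M = 0" unfolding M_def by (intro det_row_0) (use len in auto)
  then obtain v where v: "v \<in> carrier_vec n" "v \<noteq> 0\<^sub>v n" "M *\<^sub>v v = 0\<^sub>v n"
    using det_0_iff_vec_prod_zero_field[OF M] by blast
  have "v \<bullet> u = 0" if "u \<in> U" for u
  proof -
    have "u \<in> set us" using that us(1) by simp
    then obtain i where i: "i < length us" "us ! i = u" unfolding in_set_conv_nth by blast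
    have u: "u \<in> carrier_vec n" using that assms(1) by auto
    have "i < n - 1" using i(1) len by simp
    then have "row M i = u" unfolding M_def using i u by (simp add: c_def)
    then have "u \<bullet> v = (M *\<^sub>v v) $ i" using \<open>i < n - 1\<close> M by simp
    with v(3) i len have "u \<bullet> v = 0" by simp
    then show ?thesis using comm_scalar_prod[OF u v(1)] by simp
  qed
  from v(1,2) this show thesis by (rule that)
qed

lemma (in vec_space) exists_lin_indpt_family:
  fixes col :: "nat \<Rightarrow> 'p \<Rightarrow> 'a vec"
  assumes u: "u \<in> carrier_vec n" "u \<noteq> 0\<^sub>v n"
    and carr: "\<And>j p. col j p \<in> carrier_vec n"
    and hit: "\<And>j v. v \<in> carrier_vec n \<Longrightarrow> v \<noteq> 0\<^sub>v n \<Longrightarrow> \<exists>p\<in>P. v \<bullet> col j p \<noteq> 0"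
  shows "\<exists>p. (\<forall>j. p j \<in> P) \<and> lin_indpt (insert u ((\<lambda>j. col j (p j)) ` {..<n - 1}))
           \<and> card (insert u ((\<lambda>j. col j (p j)) ` {..<n - 1})) = n"
proof -
  define U where "U r p = insert u ((\<lambda>j. col j (p j)) ` {..<r})" for r p
  have U_carrier: "U r p \<subseteq> carrier_vec n" for r p using u carr by (auto simp: U_def)
  have "\<exists>p. (\<forall>j. p j \<in> P) \<and> lin_indpt (U r p) \<and> card (U r p) = r + 1" if "r \<le> n - 1" for r
    using that
  proof (induction r)
    case 0
    obtain p0 where "p0 \<in> P" using hit[OF u] by blast
    have "lin_indpt ({} \<union> {u})"
      using lin_dep_iff_in_span[of "{}" u] u by (simp add: span_empty lin_dep_def)
    with \<open>p0 \<in> P\<close> show ?case by (intro exI[of _ "\<lambda>_. p0"]) (simp add: U_def)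
  next
    case (Suc r)
    then obtain p where p: "\<forall>j. p j \<in> P" "lin_indpt (U r p)" "card (U r p) = r + 1" by auto
    have "finite (U r p)" by (simp add: U_def)
    moreover have "card (U r p) < n" using p(3) Suc.prems by simp
    ultimately obtain v where v: "v \<in> carrier_vec n" "v \<noteq> 0\<^sub>v n" "\<And>w. w \<in> U r p \<Longrightarrow> v \<bullet> w = 0"
      using exists_nonzero_orthogonal[OF U_carrier] by blast
    obtain q where q: "q \<in> P" "v \<bullet> col r q \<noteq> 0" using hit[OF v(1,2)] by blast
    have "v \<in> orthogonal_complement (U r p)"
      using v unfolding orthogonal_complement_def by simp
    then have "v \<in> orthogonal_complement (span (U r p))" using U_carrier by simp
    then have new: "col r q \<notin> span (U r p)"
      using q(2) unfolding orthogonal_complement_def by blast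
    then have old: "col r q \<notin> U r p" using in_own_span[OF U_carrier] by blast
    define p' where "p' = p(r := q)"
    have "U (Suc r) p' = insert (col r q) (U r p)"
      by (auto simp: U_def p'_def lessThan_Suc image_iff)
    moreover have "lin_indpt (U r p \<union> {col r q})"
      using lin_dep_iff_in_span[OF U_carrier p(2) carr old] new by simp
    moreover have "\<forall>j. p' j \<in> P" using p(1) q(1) by (simp add: p'_def)
    ultimately show ?case using p(3) old \<open>finite (U r p)\<close> by (intro exI[of _ p']) simp
  qed
  then show ?thesis unfolding U_def using u by (cases n) auto
qed

lemma (in vec_space) rank_eq_if_lin_indpt_cols:
  assumes "A \<in> carrier_mat n nc" "U \<subseteq> set (cols A)" "lin_indpt U" "card U = n"
  shows "rank A = n"
proof -
  have "vectorspace.dim class_ring (vs (span (set (cols A)))) \<le> dim"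
    using assms(1) cols_dim[of A]
    by (intro subspace_dim[OF span_is_subspace fin_dim fin_dim_span_cols[OF assms(1)]]) auto
  then have "rank A \<le> n" unfolding rank_def dim_is_n .
  with rank_ge_card_indpt[OF assms(1-3)] assms(4) show ?thesis by simp
qed

lemma set_cols_eq_image_col: "set (cols A) = col A ` {..<dim_col A}"
  by (simp add: cols_def lessThan_atLeast0)

section \<open>Perturbing the network one layer at a time\<close>

lemma layer_cong:
  assumes "\<And>l'. 0 < l' \<Longrightarrow> l' \<le> l \<Longrightarrow> W l' = W' l' \<and> b l' = b' l'"
  shows "layer \<sigma> n W b l y = layer \<sigma> n W' b' l y"
  using assms by (induction l) auto

definition shift_weights :: "nat \<Rightarrow> (nat \<Rightarrow> real) \<Rightarrow> (nat \<Rightarrow> real) \<Rightarrow>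
    (nat \<Rightarrow> nat \<Rightarrow> nat \<Rightarrow> real) \<Rightarrow> (nat \<Rightarrow> nat \<Rightarrow> nat \<Rightarrow> real)" where
  "shift_weights l e \<alpha> W = W(l := (\<lambda>c j. W l c j + \<alpha> j * e c))"

definition shift_bias ::
    "nat \<Rightarrow> (nat \<Rightarrow> real) \<Rightarrow> (nat \<Rightarrow> nat \<Rightarrow> real) \<Rightarrow> (nat \<Rightarrow> nat \<Rightarrow> real)" where
  "shift_bias l \<beta> b = b(l := (\<lambda>j. b l j + \<beta> j))"

lemma shift_bias_0 [simp]: "shift_bias l (\<lambda>_. 0) b = b"
  by (simp add: shift_bias_def)

lemma layer_shift_below:
  assumes "l < m"
  shows "layer \<sigma> n (shift_weights m e \<alpha> W) (shift_bias m \<beta> b) l y = layer \<sigma> n W b l y"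
  using assms by (intro layer_cong) (simp add: shift_weights_def shift_bias_def)

lemma layer_shift:
  "layer \<sigma> n (shift_weights (Suc l) e \<alpha> W) (shift_bias (Suc l) \<beta> b) (Suc l) y j =
     \<sigma> ((\<Sum>c<n l. W (Suc l) c j * layer \<sigma> n W b l y c) + b (Suc l) j
        + \<alpha> j * (\<Sum>c<n l. e c * layer \<sigma> n W b l y c) + \<beta> j)"
  by (simp only: layer.simps layer_shift_below[OF lessI])
     (simp add: shift_weights_def shift_bias_def algebra_simps sum.distrib sum_distrib_left)

definition layer_sqdist :: "(nat \<Rightarrow> nat) \<Rightarrow> nat \<Rightarrow> (nat \<Rightarrow> nat \<Rightarrow> nat \<Rightarrow> real) \<Rightarrow>
    (nat \<Rightarrow> nat \<Rightarrow> real) \<Rightarrow> (nat \<Rightarrow> nat \<Rightarrow> nat \<Rightarrow> real) \<Rightarrow> (nat \<Rightarrow> nat \<Rightarrow> real) \<Rightarrow> real" where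
  "layer_sqdist n l W b W' b' =
     (\<Sum>i<n (l - 1). \<Sum>j<n l. (W l i j - W' l i j)\<^sup>2) + (\<Sum>j<n l. (b l j - b' l j)\<^sup>2)"

lemma param_dist_eq_sqrt_sum:
  "param_dist n k W b W' b' = sqrt (\<Sum>l\<in>{1..k}. layer_sqdist n l W b W' b')"
  unfolding param_dist_def layer_sqdist_def ..

lemma param_dist_less_iff:
  assumes "0 < \<epsilon>"
  shows "param_dist n k W b W' b' < \<epsilon> \<longleftrightarrow> (\<Sum>l\<in>{1..k}. layer_sqdist n l W b W' b') < \<epsilon>\<^sup>2"
  unfolding param_dist_eq_sqrt_sum using assms by (metis abs_of_pos real_sqrt_abs real_sqrt_less_iff)

lemma layer_sqdist_cong:
  "W l = W' l \<Longrightarrow> b l = b' l \<Longrightarrow> layer_sqdist n l W b W0 b0 = layer_sqdist n l W' b' W0 b0"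
  by (simp add: layer_sqdist_def)

lemma layer_sqdist_shift:
  assumes "W l = W' l" "b l = b' l"
  shows "layer_sqdist n l (shift_weights l e \<alpha> W) (shift_bias l \<beta> b) W' b' =
           (\<Sum>j<n l. (\<alpha> j)\<^sup>2 * (\<Sum>c<n (l - 1). (e c)\<^sup>2) + (\<beta> j)\<^sup>2)"
proof -
  have "layer_sqdist n l (shift_weights l e \<alpha> W) (shift_bias l \<beta> b) W' b' =
      (\<Sum>c<n (l - 1). \<Sum>j<n l. (\<alpha> j)\<^sup>2 * (e c)\<^sup>2) + (\<Sum>j<n l. (\<beta> j)\<^sup>2)"
    using assms
    by (simp add: layer_sqdist_def shift_weights_def shift_bias_def power_mult_distrib mult_ac)
  also have "(\<Sum>c<n (l - 1). \<Sum>j<n l. (\<alpha> j)\<^sup>2 * (e c)\<^sup>2) =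
      (\<Sum>j<n l. (\<alpha> j)\<^sup>2 * (\<Sum>c<n (l - 1). (e c)\<^sup>2))"
    by (subst sum.swap) (simp add: sum_distrib_left)
  finally show ?thesis by (simp add: sum.distrib)
qed

lemma small_shift_layer_sqdist_less:
  assumes "W l = W' l" "b l = b' l" "0 < \<eta>"
  obtains \<delta> where "0 < \<delta>"
    "\<And>\<alpha> \<beta>. \<forall>j. \<bar>\<alpha> j\<bar> < \<delta> \<and> \<bar>\<beta> j\<bar> < \<delta> \<Longrightarrow> \<forall>j\<ge>m. \<alpha> j = 0 \<and> \<beta> j = 0 \<Longrightarrow>
        layer_sqdist n l (shift_weights l e \<alpha> W) (shift_bias l \<beta> b) W' b' < \<eta>"
proof -
  define E where "E = (\<Sum>c<n (l - 1). (e c)\<^sup>2)"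
  have "0 \<le> E" unfolding E_def by (simp add: sum_nonneg)
  define \<delta> where "\<delta> = sqrt (\<eta> / ((m + 1) * (E + 1)))"
  have "0 < \<delta>" unfolding \<delta>_def using \<open>0 \<le> E\<close> \<open>0 < \<eta>\<close> by simp
  have \<delta>2: "m * (\<delta>\<^sup>2 * (E + 1)) < \<eta>"
  proof -
    have "\<delta>\<^sup>2 = \<eta> / ((m + 1) * (E + 1))"
      unfolding \<delta>_def using \<open>0 \<le> E\<close> \<open>0 < \<eta>\<close> by simp
    moreover have "E + 1 \<noteq> 0" "real m + 1 \<noteq> 0" using \<open>0 \<le> E\<close> by linarith+
    ultimately have "m * (\<delta>\<^sup>2 * (E + 1)) = \<eta> * m / (m + 1)"
      by (simp add: divide_simps mult_ac)
    also have "\<dots> < \<eta>" using \<open>0 < \<eta>\<close> by (simp add: field_simps)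
    finally show ?thesis .
  qed
  show thesis
  proof (rule that[OF \<open>0 < \<delta>\<close>])
    fix \<alpha> \<beta> :: "nat \<Rightarrow> real"
    assume small: "\<forall>j. \<bar>\<alpha> j\<bar> < \<delta> \<and> \<bar>\<beta> j\<bar> < \<delta>" and supp: "\<forall>j\<ge>m. \<alpha> j = 0 \<and> \<beta> j = 0"
    define f where "f j = (\<alpha> j)\<^sup>2 * E + (\<beta> j)\<^sup>2" for j
    have f_le: "f j \<le> \<delta>\<^sup>2 * (E + 1)" for j
    proof -
      have "\<bar>\<alpha> j\<bar> \<le> \<bar>\<delta>\<bar>" "\<bar>\<beta> j\<bar> \<le> \<bar>\<delta>\<bar>" using small \<open>0 < \<delta>\<close> by (simp_all add: less_imp_le)
      then have "(\<alpha> j)\<^sup>2 \<le> \<delta>\<^sup>2" "(\<beta> j)\<^sup>2 \<le> \<delta>\<^sup>2" by (simp_all only: abs_le_square_iff)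
      moreover from this(1) have "(\<alpha> j)\<^sup>2 * E \<le> \<delta>\<^sup>2 * E" using \<open>0 \<le> E\<close> by (rule mult_right_mono)
      ultimately show ?thesis unfolding f_def by (simp add: distrib_left)
    qed
    have "layer_sqdist n l (shift_weights l e \<alpha> W) (shift_bias l \<beta> b) W' b' = (\<Sum>j<n l. f j)"
      using layer_sqdist_shift[of W l W' b b', OF assms(1,2)] by (simp add: f_def E_def)
    also have "\<dots> = (\<Sum>j\<in>{..<n l} \<inter> {..<m}. f j)"
      using supp by (intro sum.mono_neutral_right) (auto simp: f_def not_less[symmetric])
    also have "\<dots> \<le> card ({..<n l} \<inter> {..<m}) * (\<delta>\<^sup>2 * (E + 1))"
      by (rule sum_bounded_above) (rule f_le)
    also have "\<dots> \<le> m * (\<delta>\<^sup>2 * (E + 1))"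
      using \<open>0 \<le> E\<close> card_mono[of "{..<m}" "{..<n l} \<inter> {..<m}"] by (intro mult_right_mono) auto
    finally show "layer_sqdist n l (shift_weights l e \<alpha> W) (shift_bias l \<beta> b) W' b' < \<eta>"
      using \<delta>2 by simp
  qed
qed

definition distinct_features :: "(real \<Rightarrow> real) \<Rightarrow> (nat \<Rightarrow> nat) \<Rightarrow> (nat \<Rightarrow> nat \<Rightarrow> nat \<Rightarrow> real)
    \<Rightarrow> (nat \<Rightarrow> nat \<Rightarrow> real) \<Rightarrow> nat \<Rightarrow> nat \<Rightarrow> (nat \<Rightarrow> nat \<Rightarrow> real) \<Rightarrow> bool" where
  "distinct_features \<sigma> n W b l N x \<longleftrightarrow>
     (\<forall>i<N. \<forall>j<N. i \<noteq> j \<longrightarrow> (\<exists>c<n l. layer \<sigma> n W b l (x i) c \<noteq> layer \<sigma> n W b l (x j) c))"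

lemma exists_separating_weights:
  fixes v :: "nat \<Rightarrow> nat \<Rightarrow> real"
  assumes dist: "\<forall>i<N. \<forall>j<N. i \<noteq> j \<longrightarrow> (\<exists>c<m. v i c \<noteq> v j c)"
  shows "\<exists>e. \<forall>i<N. \<forall>j<N. i \<noteq> j \<longrightarrow> (\<Sum>c<m. e c * v i c) \<noteq> (\<Sum>c<m. e c * v j c)"
proof -
  \<comment> \<open>e c = t ^ c for any t avoiding the finitely many roots of the difference polynomials\<close>
  define Q where "Q i j = (\<Sum>c<m. monom (v i c - v j c) c)" for i j
  have poly_Q: "poly (Q i j) t = (\<Sum>c<m. t ^ c * v i c) - (\<Sum>c<m. t ^ c * v j c)" for i j t
    by (simp add: Q_def poly_sum poly_monom sum_subtractf[symmetric] algebra_simps)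
  define B where "B = (\<Union>i<N. \<Union>j\<in>{..<N} - {i}. {t. poly (Q i j) t = 0})"
  have "finite B" unfolding B_def
  proof (intro finite_UN_I poly_roots_finite)
    fix i j assume "i \<in> {..<N}" "j \<in> {..<N} - {i}"
    then obtain c where "c < m" "v i c \<noteq> v j c" using dist by auto
    then have "coeff (Q i j) c \<noteq> 0" by (simp add: Q_def coeff_sum)
    then show "Q i j \<noteq> 0" by auto
  qed auto
  then obtain t :: real where "t \<notin> B" using ex_new_if_finite[OF infinite_UNIV_char_0] by blast
  then show ?thesis unfolding B_def by (intro exI[of _ "\<lambda>c. t ^ c"]) (auto simp: poly_Q)
qed

lemma distinct_features_separating_weights:
  assumes "distinct_features \<sigma> n W b l N x"
  obtains e where "\<And>i j. i < N \<Longrightarrow> j < N \<Longrightarrow> i \<noteq> j \<Longrightarrow>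
    (\<Sum>c<n l. e c * layer \<sigma> n W b l (x i) c) \<noteq> (\<Sum>c<n l. e c * layer \<sigma> n W b l (x j) c)"
proof -
  have "\<exists>e. \<forall>i<N. \<forall>j<N. i \<noteq> j \<longrightarrow>
      (\<Sum>c<n l. e c * layer \<sigma> n W b l (x i) c) \<noteq> (\<Sum>c<n l. e c * layer \<sigma> n W b l (x j) c)"
    by (rule exists_separating_weights) (use assms in \<open>simp add: distinct_features_def\<close>)
  with that show thesis by blast
qed

lemma exists_shift_separating_next_layer:
  assumes mono: "strict_mono \<sigma>" and "0 < n (Suc l)"
    and dist: "distinct_features \<sigma> n W b l N x"
    and "W (Suc l) = W0 (Suc l)" "b (Suc l) = b0 (Suc l)" "0 < \<eta>"
  shows "\<exists>W'. (\<forall>l'. l' \<noteq> Suc l \<longrightarrow> W' l' = W l') \<and> layer_sqdist n (Suc l) W' b W0 b0 < \<eta>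
           \<and> distinct_features \<sigma> n W' b (Suc l) N x"
proof -
  obtain e where e: "\<And>i j. i < N \<Longrightarrow> j < N \<Longrightarrow> i \<noteq> j \<Longrightarrow>
    (\<Sum>c<n l. e c * layer \<sigma> n W b l (x i) c) \<noteq> (\<Sum>c<n l. e c * layer \<sigma> n W b l (x j) c)"
    using distinct_features_separating_weights[OF dist] by blast
  define s where "s i = (\<Sum>c<n l. e c * layer \<sigma> n W b l (x i) c)" for i
  define z where "z i = (\<Sum>c<n l. W (Suc l) c 0 * layer \<sigma> n W b l (x i) c) + b (Suc l) 0" for i
  obtain \<delta> where "0 < \<delta>" and \<delta>: "\<And>\<alpha> \<beta>. \<forall>j. \<bar>\<alpha> j\<bar> < \<delta> \<and> \<bar>\<beta> j\<bar> < \<delta> \<Longrightarrow>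
      \<forall>j\<ge>1. \<alpha> j = 0 \<and> \<beta> j = 0 \<Longrightarrow>
      layer_sqdist n (Suc l) (shift_weights (Suc l) e \<alpha> W) (shift_bias (Suc l) \<beta> b) W0 b0 < \<eta>"
    using small_shift_layer_sqdist_less[where W = W and b = b and W' = W0 and b' = b0 and l = "Suc l",
        OF assms(4-6)] by blast
  \<comment> \<open>the values of \<alpha> for which two inputs collide in the first coordinate\<close>
  define B where "B = (\<lambda>(i, j). (z j - z i) / (s i - s j)) ` ({..<N} \<times> {..<N})"
  have "infinite ({0<..<\<delta>} - B)" using \<open>0 < \<delta>\<close> by (simp add: B_def Diff_infinite_finite)
  then obtain \<alpha> where "\<alpha> \<in> {0<..<\<delta>} - B" using infinite_imp_nonempty by blast
  then have \<alpha>: "0 < \<alpha>" "\<alpha> < \<delta>" "\<alpha> \<notin> B" by auto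
  define a where "a j = (if j = 0 then \<alpha> else 0)" for j :: nat
  define W' where "W' = shift_weights (Suc l) e a W"
  have first: "layer \<sigma> n W' b (Suc l) (x i) 0 = \<sigma> (z i + \<alpha> * s i)" for i
    using layer_shift[of \<sigma> n l e a W "\<lambda>_. 0" b "x i" 0] by (simp add: W'_def a_def z_def s_def)
  have "distinct_features \<sigma> n W' b (Suc l) N x" unfolding distinct_features_def
  proof (intro allI impI exI conjI)
    fix i j assume ij: "i < N" "j < N" "i \<noteq> j"
    have "z i + \<alpha> * s i \<noteq> z j + \<alpha> * s j"
    proof
      assume "z i + \<alpha> * s i = z j + \<alpha> * s j"
      then have "\<alpha> = (z j - z i) / (s i - s j)" using e[OF ij] by (simp add: s_def field_simps)
      moreover have "(z j - z i) / (s i - s j) \<in> B"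
        unfolding B_def using ij by (auto intro!: image_eqI[where x = "(i, j)"])
      ultimately show False using \<alpha>(3) by simp
    qed
    then show "layer \<sigma> n W' b (Suc l) (x i) 0 \<noteq> layer \<sigma> n W' b (Suc l) (x j) 0"
      unfolding first using strict_mono_eq[OF mono] by simp
  qed (use \<open>0 < n (Suc l)\<close> in simp)
  moreover have "layer_sqdist n (Suc l) W' b W0 b0 < \<eta>"
    using \<delta>[of a "\<lambda>_. 0"] \<alpha> \<open>0 < \<delta>\<close> by (simp add: W'_def a_def)
  moreover have "\<forall>l'. l' \<noteq> Suc l \<longrightarrow> W' l' = W l'" by (simp add: W'_def shift_weights_def)
  ultimately show ?thesis by blast
qed

lemma exists_params_distinct_features:
  assumes mono: "strict_mono \<sigma>" and widths: "\<forall>l\<in>{1..K}. 0 < n l"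
    and dist: "distinct_features \<sigma> n W0 b0 0 N x" and "0 < \<eta>"
  shows "\<exists>W. (\<Sum>l\<in>{1..K}. layer_sqdist n l W b0 W0 b0) < \<eta> \<and> (\<forall>l>K. W l = W0 l)
           \<and> distinct_features \<sigma> n W b0 K N x"
  using widths \<open>0 < \<eta>\<close>
proof (induction K arbitrary: \<eta>)
  case 0
  with dist show ?case by (intro exI[of _ W0]) simp
next
  case (Suc K)
  have "\<forall>l\<in>{1..K}. 0 < n l" using Suc.prems(1) by simp
  then obtain W where W: "(\<Sum>l\<in>{1..K}. layer_sqdist n l W b0 W0 b0) < \<eta> / 2"
    "\<forall>l>K. W l = W0 l" "distinct_features \<sigma> n W b0 K N x"
    using Suc.IH[of "\<eta> / 2"] Suc.prems(2) by auto
  obtain W' where W': "\<forall>l'. l' \<noteq> Suc K \<longrightarrow> W' l' = W l'" "layer_sqdist n (Suc K) W' b0 W0 b0 < \<eta> / 2"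
    "distinct_features \<sigma> n W' b0 (Suc K) N x"
    using exists_shift_separating_next_layer[OF mono _ W(3), of W0 b0 "\<eta> / 2"] W(2) Suc.prems
    by auto
  have "(\<Sum>l\<in>{1..K}. layer_sqdist n l W' b0 W0 b0) = (\<Sum>l\<in>{1..K}. layer_sqdist n l W b0 W0 b0)"
    using W'(1) by (intro sum.cong layer_sqdist_cong) auto
  then have "(\<Sum>l\<in>{1..Suc K}. layer_sqdist n l W' b0 W0 b0) < \<eta>"
    using W(1) W'(2) by simp
  moreover have "\<forall>l>Suc K. W' l = W0 l" using W(2) W'(1) by simp
  ultimately show ?case using W'(3) by blast
qed

lemma feat_ones_carrier: "feat_ones \<sigma> n W b k N x \<in> carrier_mat N (n k + 1)"
  by (simp add: feat_ones_def)

lemma col_feat_ones: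
  "j < n k \<Longrightarrow> col (feat_ones \<sigma> n W b k N x) j = vec N (\<lambda>i. layer \<sigma> n W b k (x i) j)"
  by (auto simp: feat_ones_def)

lemma col_feat_ones_last: "col (feat_ones \<sigma> n W b k N x) (n k) = vec N (\<lambda>_. 1)"
  by (auto simp: feat_ones_def)

lemma rank_feat_ones_no_inputs: "vec_space.rank 0 (feat_ones \<sigma> n W b k 0 x) = 0"
proof -
  interpret vec_space "TYPE(real)" 0 .
  show ?thesis
    by (rule rank_eq_if_lin_indpt_cols[OF feat_ones_carrier, of "{}"]) (simp_all add: lin_dep_def)
qed

lemma exists_shift_full_rank:
  fixes \<sigma> :: "real \<Rightarrow> real"
  assumes an: "real_analytic_on_R \<sigma>"
    and deriv_pos: "\<forall>t. \<exists>D. (\<sigma> has_real_derivative D) (at t) \<and> D > 0"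
    and bdd: "\<And>t. t < 0 \<Longrightarrow> \<bar>\<sigma> t\<bar> \<le> M"
    and dist: "distinct_features \<sigma> n W b l N x" and "0 < N" and width: "N - 1 \<le> n (Suc l)"
    and "W (Suc l) = W0 (Suc l)" "b (Suc l) = b0 (Suc l)" "0 < \<eta>"
  shows "\<exists>W' b'. (\<forall>l'. l' \<noteq> Suc l \<longrightarrow> W' l' = W l' \<and> b' l' = b l')
           \<and> layer_sqdist n (Suc l) W' b' W0 b0 < \<eta>
           \<and> vec_space.rank N (feat_ones \<sigma> n W' b' (Suc l) N x) = N"
proof -
  interpret vec_space "TYPE(real)" N .
  obtain e where sep: "\<And>i j. i < N \<Longrightarrow> j < N \<Longrightarrow> i \<noteq> j \<Longrightarrow>
    (\<Sum>c<n l. e c * layer \<sigma> n W b l (x i) c) \<noteq> (\<Sum>c<n l. e c * layer \<sigma> n W b l (x j) c)"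
    using distinct_features_separating_weights[OF dist] by blast
  define s where "s i = (\<Sum>c<n l. e c * layer \<sigma> n W b l (x i) c)" for i
  have e: "\<forall>i<N. \<forall>j<N. i \<noteq> j \<longrightarrow> s i \<noteq> s j" using sep by (simp add: s_def)
  define z where "z j i = (\<Sum>c<n l. W (Suc l) c j * layer \<sigma> n W b l (x i) c) + b (Suc l) j" for j i
  obtain \<delta> where "0 < \<delta>" and \<delta>: "\<And>\<alpha> \<beta>. \<forall>j. \<bar>\<alpha> j\<bar> < \<delta> \<and> \<bar>\<beta> j\<bar> < \<delta> \<Longrightarrow>
      \<forall>j\<ge>N - 1. \<alpha> j = 0 \<and> \<beta> j = 0 \<Longrightarrow>
      layer_sqdist n (Suc l) (shift_weights (Suc l) e \<alpha> W) (shift_bias (Suc l) \<beta> b) W0 b0 < \<eta>"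
    using small_shift_layer_sqdist_less[where W = W and b = b and W' = W0 and b' = b0 and l = "Suc l",
        OF assms(7-9)] by blast
  define column where "column j p = vec N (\<lambda>i. \<sigma> (z j i + fst p * s i + snd p))" for j p
  define P where "P = {p :: real \<times> real. \<bar>fst p\<bar> < \<delta> \<and> \<bar>snd p\<bar> < \<delta>}"
  have column_carrier: "column j p \<in> carrier_vec N" for j p by (simp add: column_def)
  have hit: "\<exists>p\<in>P. v \<bullet> column j p \<noteq> 0" if "v \<in> carrier_vec N" "v \<noteq> 0\<^sub>v N" for j v
    using exists_shifted_column_not_orthogonal[OF an deriv_pos bdd e that \<open>0 < \<delta>\<close>, of "z j"]
    unfolding P_def column_def by auto
  have ones: "vec N (\<lambda>_. 1) \<in> carrier_vec N" "vec N (\<lambda>_. 1) \<noteq> (0\<^sub>v N :: real vec)"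
    using \<open>0 < N\<close> by (auto simp: vec_eq_iff)
  have "\<exists>p. (\<forall>j. p j \<in> P) \<and> lin_indpt (insert (vec N (\<lambda>_. 1)) ((\<lambda>j. column j (p j)) ` {..<N - 1}))
      \<and> card (insert (vec N (\<lambda>_. 1)) ((\<lambda>j. column j (p j)) ` {..<N - 1})) = N"
    using hit by (rule exists_lin_indpt_family[OF ones column_carrier])
  then obtain p where p: "\<forall>j. p j \<in> P"
    "lin_indpt (insert (vec N (\<lambda>_. 1)) ((\<lambda>j. column j (p j)) ` {..<N - 1}))"
    "card (insert (vec N (\<lambda>_. 1)) ((\<lambda>j. column j (p j)) ` {..<N - 1})) = N"
    by blast
  define \<alpha> where "\<alpha> j = (if j < N - 1 then fst (p j) else 0)" for j
  define \<beta> where "\<beta> j = (if j < N - 1 then snd (p j) else 0)" for j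
  define W' where "W' = shift_weights (Suc l) e \<alpha> W"
  define b' where "b' = shift_bias (Suc l) \<beta> b"
  define A where "A = feat_ones \<sigma> n W' b' (Suc l) N x"
  have col_A: "col A j = column j (p j)" if "j < N - 1" for j
    using that width layer_shift[of \<sigma> n l e \<alpha> W \<beta> b]
    by (simp add: A_def col_feat_ones W'_def b'_def column_def \<alpha>_def \<beta>_def z_def s_def)
  have in_cols: "col A j \<in> set (cols A)" if "j \<le> n (Suc l)" for j
    using that unfolding set_cols_eq_image_col by (simp add: A_def feat_ones_def)
  have "column j (p j) \<in> set (cols A)" if "j < N - 1" for j
    using col_A[OF that] in_cols[of j] that width by simp
  moreover have "vec N (\<lambda>_. 1) \<in> set (cols A)"
    using in_cols[of "n (Suc l)"] unfolding A_def col_feat_ones_last by simp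
  ultimately have "insert (vec N (\<lambda>_. 1)) ((\<lambda>j. column j (p j)) ` {..<N - 1}) \<subseteq> set (cols A)"
    by auto
  then have "rank A = N"
    unfolding A_def by (rule rank_eq_if_lin_indpt_cols[OF feat_ones_carrier _ p(2,3)])
  moreover have "\<forall>j. \<bar>\<alpha> j\<bar> < \<delta> \<and> \<bar>\<beta> j\<bar> < \<delta>"
    using p(1) \<open>0 < \<delta>\<close> by (simp add: \<alpha>_def \<beta>_def P_def)
  then have "layer_sqdist n (Suc l) W' b' W0 b0 < \<eta>"
    unfolding W'_def b'_def by (rule \<delta>) (simp add: \<alpha>_def \<beta>_def)
  moreover have "\<forall>l'. l' \<noteq> Suc l \<longrightarrow> W' l' = W l' \<and> b' l' = b l'"
    by (simp add: W'_def b'_def shift_weights_def shift_bias_def)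
  ultimately show ?thesis unfolding A_def by blast
qed

lemma strict_mono_if_deriv_pos:
  fixes \<sigma> :: "real \<Rightarrow> real"
  assumes "\<forall>t. \<exists>D. (\<sigma> has_real_derivative D) (at t) \<and> D > 0"
  shows "strict_mono \<sigma>"
proof (rule strict_monoI)
  fix a b :: real assume "a < b"
  then show "\<sigma> a < \<sigma> b" by (rule DERIV_pos_imp_increasing) (use assms in blast)
qed

lemma bounded_on_negatives_if_growth:
  fixes \<sigma> :: "real \<Rightarrow> real"
  assumes "(\<exists>M. \<forall>t. \<bar>\<sigma> t\<bar> \<le> M) \<or>
       (\<exists>\<rho>1 \<rho>2 \<rho>3 \<rho>4 :: real. \<rho>1 > 0 \<and> \<rho>2 > 0 \<and> \<rho>3 > 0 \<and> \<rho>4 > 0 \<and>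
          (\<forall>t<0. \<bar>\<sigma> t\<bar> \<le> \<rho>1 * exp (\<rho>2 * t)) \<and>
          (\<forall>t\<ge>0. \<bar>\<sigma> t\<bar> \<le> \<rho>3 * t + \<rho>4))"
  obtains M where "\<And>t. t < 0 \<Longrightarrow> \<bar>\<sigma> t\<bar> \<le> M"
  using assms
proof (elim disjE exE conjE)
  fix \<rho>1 \<rho>2 \<rho>3 \<rho>4 :: real
  assume "0 < \<rho>1" "0 < \<rho>2" "0 < \<rho>3" "0 < \<rho>4"
    and left: "\<forall>t<0. \<bar>\<sigma> t\<bar> \<le> \<rho>1 * exp (\<rho>2 * t)" and "\<forall>t\<ge>0. \<bar>\<sigma> t\<bar> \<le> \<rho>3 * t + \<rho>4"
  have "\<bar>\<sigma> t\<bar> \<le> \<rho>1" if "t < 0" for t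
  proof -
    have "exp (\<rho>2 * t) \<le> 1" using mult_pos_neg[OF \<open>0 < \<rho>2\<close> that] by simp
    then have "\<rho>1 * exp (\<rho>2 * t) \<le> \<rho>1" using \<open>0 < \<rho>1\<close> by (simp add: mult_le_cancel_left1)
    with left that show ?thesis by force
  qed
  with that show thesis by blast
qed (use that in blast)

theorem mainTheorem10:
  fixes \<sigma> :: "real \<Rightarrow> real"
    and d N L k :: nat
    and n :: "nat \<Rightarrow> nat"
    and x :: "nat \<Rightarrow> nat \<Rightarrow> real"
    and W0 :: "nat \<Rightarrow> nat \<Rightarrow> nat \<Rightarrow> real"
    and b0 :: "nat \<Rightarrow> nat \<Rightarrow> real"
    and \<epsilon> :: real
  assumes n0: "n 0 = d"
    and widths_pos: "\<forall>l\<in>{1..L}. 0 < n l"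
    and distinct_inputs: "\<forall>i<N. \<forall>j<N. i \<noteq> j \<longrightarrow> (\<exists>c<d. x i c \<noteq> x j c)"
    and analytic: "real_analytic_on_R \<sigma>"
    and deriv_pos: "\<forall>t. \<exists>D. (\<sigma> has_real_derivative D) (at t) \<and> D > 0"
    and growth: "(\<exists>M. \<forall>t. \<bar>\<sigma> t\<bar> \<le> M) \<or>
       (\<exists>\<rho>1 \<rho>2 \<rho>3 \<rho>4 :: real. \<rho>1 > 0 \<and> \<rho>2 > 0 \<and> \<rho>3 > 0 \<and> \<rho>4 > 0 \<and>
          (\<forall>t<0. \<bar>\<sigma> t\<bar> \<le> \<rho>1 * exp (\<rho>2 * t)) \<and>
          (\<forall>t\<ge>0. \<bar>\<sigma> t\<bar> \<le> \<rho>3 * t + \<rho>4))"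
    and k_range: "1 \<le> k" "k \<le> L - 1"
    and width_k: "n k \<ge> N - 1"
    and eps: "\<epsilon> > 0"
  shows "\<exists>W b. param_dist n k W b W0 b0 < \<epsilon> \<and>
           vec_space.rank N (feat_ones \<sigma> n W b k N x) = N"
proof (cases "N = 0")
  case True
  with eps rank_feat_ones_no_inputs show ?thesis
    by (intro exI[of _ W0] exI[of _ b0]) (simp add: param_dist_def)
next
  case False
  have mono: "strict_mono \<sigma>" using deriv_pos by (rule strict_mono_if_deriv_pos)
  obtain M where bdd: "\<And>t. t < 0 \<Longrightarrow> \<bar>\<sigma> t\<bar> \<le> M"
    using bounded_on_negatives_if_growth[OF growth] by blast
  obtain K where k: "k = Suc K" using k_range(1) by (cases k) auto
  have "\<forall>l\<in>{1..K}. 0 < n l" using widths_pos k k_range by auto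
  moreover have "distinct_features \<sigma> n W0 b0 0 N x"
    using distinct_inputs n0 by (simp add: distinct_features_def)
  moreover have "0 < \<epsilon>\<^sup>2 / 2" using eps by simp
  ultimately obtain W1 where W1: "(\<Sum>l\<in>{1..K}. layer_sqdist n l W1 b0 W0 b0) < \<epsilon>\<^sup>2 / 2"
    "\<forall>l>K. W1 l = W0 l" "distinct_features \<sigma> n W1 b0 K N x"
    using exists_params_distinct_features[OF mono] by blast
  have "\<exists>W b. (\<forall>l. l \<noteq> k \<longrightarrow> W l = W1 l \<and> b l = b0 l) \<and> layer_sqdist n k W b W0 b0 < \<epsilon>\<^sup>2 / 2
      \<and> vec_space.rank N (feat_ones \<sigma> n W b k N x) = N"
    unfolding k using False width_k W1(2) k \<open>0 < \<epsilon>\<^sup>2 / 2\<close>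
    by (intro exists_shift_full_rank[OF analytic deriv_pos bdd W1(3)]) auto
  then obtain W b where Wb: "\<forall>l. l \<noteq> k \<longrightarrow> W l = W1 l \<and> b l = b0 l"
    "layer_sqdist n k W b W0 b0 < \<epsilon>\<^sup>2 / 2" "vec_space.rank N (feat_ones \<sigma> n W b k N x) = N"
    by blast
  have "(\<Sum>l\<in>{1..K}. layer_sqdist n l W b W0 b0) = (\<Sum>l\<in>{1..K}. layer_sqdist n l W1 b0 W0 b0)"
    using Wb(1) k by (intro sum.cong layer_sqdist_cong) auto
  then have "param_dist n k W b W0 b0 < \<epsilon>"
    using W1(1) Wb(2) k by (simp add: param_dist_less_iff[OF eps])
  with Wb(3) show ?thesis by blast
qed

end
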